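(* For integers $n\ge0$ and $0\le k\le n$, the number of ways to place $k$ dots in cells of the double staircase $2\delta_n$ such that each row contains at most one dot and each column contains at most one dot is $$\frac{(n+1)!}{(n-k+1)!}\binom{n}{k}.$$
   Context: The double staircase $2\delta_n$ is the Young diagram with $n$ rows of lengths $2n,2n-2,\dots,2$ (left-justified; $2\delta_0$ is empty). *)

theory Defs
  imports Complex_Main
begin

text \<open>Cells (i,j) of the double staircase 2 delta_n, rows i = 1..n (top to bottom),
  row i has length 2(n - i + 1), columns j = 1..2(n-i+1), left-justified.\<close>
definition double_staircase :: "nat \<Rightarrow> (nat \<times> nat) set" where
  "double_staircase n = {(i, j). 1 \<le> i \<and> i \<le> n \<and> 1 \<le> j \<and> j \<le> 2 * (n - i + 1)}"

definition rook_placements :: "(nat \<times> nat) set \<Rightarrow> nat \<Rightarrow> (nat \<times> nat) set set" where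
  "rook_placements D k = {S. S \<subseteq> D \<and> card S = k \<and>
      (\<forall>c\<in>S. \<forall>d\<in>S. fst c = fst d \<longrightarrow> c = d) \<and>
      (\<forall>c\<in>S. \<forall>d\<in>S. snd c = snd d \<longrightarrow> c = d)}"

end

theory Submission
  imports Defs
begin

text \<open>
  Deleting the top row of 2 delta_m leaves a translate of 2 delta_(m-1), and the top row spans every
  column of the remaining board. A placement of k+1 dots either avoids the top row, or consists
  of a placement of k dots below it together with one dot in one of the 2m - k top-row columns
  it leaves free. Hence the counts c(m,k) satisfy
  c(m+1,k+1) = c(m,k+1) + (2(m+1) - k) c(m,k), and
  (m+1)!/(m-k+1)! * binomial m k is the solution of this recurrence, by Pascal's rule.
\<close>

lemma finite_rook_placements: "finite D \<Longrightarrow> finite (rook_placements D k)"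
  unfolding rook_placements_def by (rule finite_subset[of _ "Pow D"]) auto

lemma rook_placements_0: "finite D \<Longrightarrow> rook_placements D 0 = {{}}"
  unfolding rook_placements_def by (auto dest: finite_subset)

lemma rook_placements_empty_board: "rook_placements {} (Suc k) = {}"
  unfolding rook_placements_def by auto

context
  fixes r :: nat and J :: "nat set" and E :: "(nat \<times> nat) set"
  assumes finite_J: "finite J" and finite_E: "finite E"
    and E_off_row: "\<And>c. c \<in> E \<Longrightarrow> fst c \<noteq> r"
    and E_columns: "snd ` E \<subseteq> J"
begin

lemma rook_placements_avoiding_row:
  "{S \<in> rook_placements ({r} \<times> J \<union> E) m. S \<inter> {r} \<times> J = {}} = rook_placements E m"
  using E_off_row unfolding rook_placements_def by fastforce

lemma card_free_columns:
  assumes "S \<in> rook_placements E k"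
  shows "card (J - snd ` S) = card J - k"
proof -
  from assms have "S \<subseteq> E" "card S = k" and cols: "\<forall>c\<in>S. \<forall>d\<in>S. snd c = snd d \<longrightarrow> c = d"
    unfolding rook_placements_def by auto
  moreover from cols have "inj_on snd S" by (auto intro: inj_onI)
  ultimately have "card (snd ` S) = k" and "snd ` S \<subseteq> J"
    using card_image E_columns by blast+
  then show ?thesis by (simp add: card_Diff_subset finite_subset[OF _ finite_J])
qed

lemma rook_placements_meeting_row:
  "{S \<in> rook_placements ({r} \<times> J \<union> E) (Suc k). S \<inter> {r} \<times> J \<noteq> {}}
     = (\<lambda>(S, j). insert (r, j) S) ` (SIGMA S:rook_placements E k. J - snd ` S)"
  (is "?L = ?R")
proof
  show "?L \<subseteq> ?R"
  proof
    fix S assume "S \<in> ?L"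
    then have S: "S \<subseteq> {r} \<times> J \<union> E" "card S = Suc k"
      and rows: "\<forall>c\<in>S. \<forall>d\<in>S. fst c = fst d \<longrightarrow> c = d"
      and cols: "\<forall>c\<in>S. \<forall>d\<in>S. snd c = snd d \<longrightarrow> c = d"
      and "S \<inter> {r} \<times> J \<noteq> {}"
      unfolding rook_placements_def by auto
    then obtain j where j: "(r, j) \<in> S" "j \<in> J" by auto
    have finite_S: "finite S"
      by (rule finite_subset[OF S(1)]) (simp add: finite_J finite_E)
    have "S - {(r, j)} \<subseteq> E"
      using S(1) rows j(1) by fastforce
    then have "S - {(r, j)} \<in> rook_placements E k"
      using S(2) rows cols finite_S j(1) unfolding rook_placements_def by auto
    moreover have "j \<notin> snd ` (S - {(r, j)})"
      using cols j(1) by fastforce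
    ultimately show "S \<in> ?R"
      using j by (intro image_eqI[of _ _ "(S - {(r, j)}, j)"]) auto
  qed
next
  show "?R \<subseteq> ?L"
  proof
    fix S' assume "S' \<in> ?R"
    then obtain S j where S': "S' = insert (r, j) S" and j: "j \<in> J" "j \<notin> snd ` S"
      and S: "S \<subseteq> E" "card S = k"
        "\<forall>c\<in>S. \<forall>d\<in>S. fst c = fst d \<longrightarrow> c = d"
        "\<forall>c\<in>S. \<forall>d\<in>S. snd c = snd d \<longrightarrow> c = d"
      unfolding rook_placements_def by auto
    have "(r, j) \<notin> S"
      using S(1) E_off_row by fastforce
    moreover have "\<forall>c\<in>S. fst c \<noteq> r"
      using S(1) E_off_row by blast
    moreover have "finite S"
      using S(1) finite_E finite_subset by blast
    ultimately show "S' \<in> ?L"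
      using S j unfolding S' rook_placements_def by (auto simp: image_iff)
  qed
qed

lemma inj_on_insert_row_cell:
  "inj_on (\<lambda>(S, j). insert (r, j) S) (SIGMA S:rook_placements E k. J - snd ` S)"
proof (rule inj_onI, clarify)
  fix S j S' j'
  assume "S \<in> rook_placements E k" "S' \<in> rook_placements E k"
    and eq: "insert (r, j) S = insert (r, j') S'"
  then have "(r, j) \<notin> S" "(r, j) \<notin> S'"
    using E_off_row unfolding rook_placements_def by fastforce+
  moreover from eq have "(r, j) \<in> insert (r, j') S'"
    by blast
  ultimately have "j = j'"
    by blast
  with eq \<open>(r, j) \<notin> S\<close> \<open>(r, j) \<notin> S'\<close> show "S = S' \<and> j = j'"
    using insert_ident by metis
qed

theorem card_rook_placements_add_row:
  "card (rook_placements ({r} \<times> J \<union> E) (Suc k))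
     = card (rook_placements E (Suc k)) + (card J - k) * card (rook_placements E k)"
proof -
  let ?P = "rook_placements ({r} \<times> J \<union> E) (Suc k)"
  let ?Sigma = "SIGMA S:rook_placements E k. J - snd ` S"
  have finite_P: "finite ?P"
    using finite_J finite_E by (simp add: finite_rook_placements)
  have "card ?P = card ({S \<in> ?P. S \<inter> {r} \<times> J = {}} \<union> {S \<in> ?P. S \<inter> {r} \<times> J \<noteq> {}})"
    by (rule arg_cong[where f = card]) blast
  also have "\<dots> = card {S \<in> ?P. S \<inter> {r} \<times> J = {}} + card {S \<in> ?P. S \<inter> {r} \<times> J \<noteq> {}}"
    by (rule card_Un_disjoint) (use finite_P in auto)
  also have "card {S \<in> ?P. S \<inter> {r} \<times> J \<noteq> {}} = card ?Sigma"
    unfolding rook_placements_meeting_row by (rule card_image[OF inj_on_insert_row_cell])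
  also have "card ?Sigma = (\<Sum>S\<in>rook_placements E k. card (J - snd ` S))"
    using finite_J finite_E by (intro card_SigmaI) (auto simp: finite_rook_placements)
  also have "\<dots> = (\<Sum>S\<in>rook_placements E k. card J - k)"
    by (rule sum.cong[OF refl card_free_columns])
  also have "\<dots> = (card J - k) * card (rook_placements E k)"
    by simp
  finally show ?thesis
    unfolding rook_placements_avoiding_row .
qed

end

text \<open>Rows a+1, ..., n of 2 delta_n, i.e. a copy of 2 delta_(n-a) shifted down by a rows.\<close>
definition staircase_rows_below :: "nat \<Rightarrow> nat \<Rightarrow> (nat \<times> nat) set" where
  "staircase_rows_below a n = {(i, j). a < i \<and> i \<le> n \<and> 1 \<le> j \<and> j \<le> 2 * (n - i + 1)}"

lemma double_staircase_eq_rows_below: "double_staircase n = staircase_rows_below 0 n"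
  unfolding double_staircase_def staircase_rows_below_def by auto

lemma finite_staircase_rows_below: "finite (staircase_rows_below a n)"
  by (rule finite_subset[of _ "{0..n} \<times> {0..2 * n + 2}"]) (auto simp: staircase_rows_below_def)

lemma staircase_rows_below_empty: "n \<le> a \<Longrightarrow> staircase_rows_below a n = {}"
  unfolding staircase_rows_below_def by auto

lemma staircase_rows_below_split_top_row:
  "a < n \<Longrightarrow> staircase_rows_below a n
     = {Suc a} \<times> {1..2 * (n - a)} \<union> staircase_rows_below (Suc a) n"
  unfolding staircase_rows_below_def by auto

lemma card_rook_placements_staircase_rows_below_Suc:
  assumes "a < n"
  shows "card (rook_placements (staircase_rows_below a n) (Suc k))
     = card (rook_placements (staircase_rows_below (Suc a) n) (Suc k))
       + (2 * (n - a) - k) * card (rook_placements (staircase_rows_below (Suc a) n) k)"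
proof -
  have "snd ` staircase_rows_below (Suc a) n \<subseteq> {1..2 * (n - a)}"
    and "\<And>c. c \<in> staircase_rows_below (Suc a) n \<Longrightarrow> fst c \<noteq> Suc a"
    unfolding staircase_rows_below_def by auto
  from card_rook_placements_add_row[OF _ finite_staircase_rows_below this(2,1)]
  show ?thesis
    by (simp add: staircase_rows_below_split_top_row[OF assms])
qed

lemma staircase_count_identity:
  fixes m k :: nat
  shows "(m - k + 1) * (m choose Suc k) + (2 * Suc m - k) * (m choose k)
           = (m + 2) * ((m choose k) + (m choose Suc k))"
proof (cases "k \<le> m")
  case True
  then obtain d where d: "m = k + d"
    using le_Suc_ex by blast
  have "d * (m choose k) = Suc k * (m choose Suc k)"
    using binomial_absorb_comp[of m k] binomial_absorption[of k m] d by simp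
  then show ?thesis
    unfolding d by (simp add: algebra_simps)
next
  case False
  then show ?thesis by (simp add: binomial_eq_0)
qed

text \<open>Multiplied out, the formula also holds for k > m (both sides vanish); the induction needs
  that case for the term c(m, k+1) with k = m.\<close>
lemma card_rook_placements_staircase_rows_below:
  "n - a = m \<Longrightarrow> card (rook_placements (staircase_rows_below a n) k) * fact (m - k + 1)
     = fact (m + 1) * (m choose k)"
proof (induction m arbitrary: a k)
  case 0
  then show ?case
    by (cases k) (simp_all add: staircase_rows_below_empty rook_placements_empty_board rook_placements_0)
next
  case (Suc m)
  then have "a < n" and m: "n - Suc a = m" by auto
  show ?case
  proof (cases k)
    case 0
    then show ?thesis by (simp add: rook_placements_0 finite_staircase_rows_below)
  next
    case (Suc k')
    let ?c = "\<lambda>k. card (rook_placements (staircase_rows_below (Suc a) n) k)"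
    have IH: "?c k * fact (m - k + 1) = fact (m + 1) * (m choose k)" for k
      using Suc.IH[OF m] .
    have IH_Suc: "?c (Suc k') * fact (m - k' + 1) = (m - k' + 1) * (fact (m + 1) * (m choose Suc k'))"
    proof (cases "k' < m")
      case True
      then have "fact (m - k' + 1) = (m - k' + 1) * (fact (m - Suc k' + 1) :: nat)"
        by (simp add: Suc_diff_Suc)
      then show ?thesis using IH[of "Suc k'"] by (metis mult.left_commute)
    next
      case False
      then have "?c (Suc k') = 0"
        using IH[of "Suc k'"] by (simp add: binomial_eq_0)
      with False show ?thesis by (simp add: binomial_eq_0)
    qed
    have "card (rook_placements (staircase_rows_below a n) k) * fact (Suc m - k + 1)
        = ?c (Suc k') * fact (m - k' + 1) + (2 * Suc m - k') * (?c k' * fact (m - k' + 1))"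
      unfolding Suc card_rook_placements_staircase_rows_below_Suc[OF \<open>a < n\<close>] Suc.prems
      by (simp only: diff_Suc_Suc add_mult_distrib mult.assoc)
    also have "\<dots> = fact (m + 1) * ((m - k' + 1) * (m choose Suc k') + (2 * Suc m - k') * (m choose k'))"
      unfolding IH_Suc IH by (simp only: distrib_left mult.left_commute)
    also have "\<dots> = fact (m + 1) * ((m + 2) * ((m choose k') + (m choose Suc k')))"
      by (simp only: staircase_count_identity)
    finally show ?thesis
      using Suc by (simp add: algebra_simps)
  qed
qed

theorem mainTheorem10:
  fixes n k :: nat
  assumes "k \<le> n"
  shows "real (card (rook_placements (double_staircase n) k))
         = fact (n + 1) / fact (n - k + 1) * real (n choose k)"
proof -
  have "real (card (rook_placements (double_staircase n) k)) * fact (n - k + 1)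
      = fact (n + 1) * real (n choose k)"
    using arg_cong[OF card_rook_placements_staircase_rows_below[of n 0 n k], of real]
    unfolding double_staircase_eq_rows_below of_nat_mult of_nat_fact by simp
  moreover have "(fact (n - k + 1) :: real) \<noteq> 0"
    by simp
  ultimately show ?thesis
    by (simp add: field_simps)
qed

end
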